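(* Let $W$ be a finite set of possible worlds and let $G=(2^W,\gg)$ and $G'=(2^W,\gg')$ be belief algebras on $W$. Then $G\cap G'=(2^W,\gg\cap\gg')$ is a belief algebra.
   Context: $R_W=\{(U,V)\mid U,V\subseteq W,\ U\cap V=\varnothing\}$. A belief algebra on $W$ is a pair $(2^W,\gg)$, $\gg$ a binary relation on $2^W$, such that for all $U,V,U_1,V_1,U_2,V_2\subseteq W$: (A0) $\gg\subseteq R_W$; (A1) $U\gg\varnothing$ iff $U\neq\varnothing$; (A2) if $U\gg V$ then not $V\gg U$; (A3) if $U_1\supseteq U$, $U\gg V$, $V\supseteq V_1$ and $U_1\cap V_1=\varnothing$, then $U_1\gg V_1$; (A4) if $U=U_1\cup V_1=U_2\cup V_2$, $U_1\gg V_1$ and $U_2\gg V_2$, then $U_1\cap U_2\gg V_1\cup V_2$. Relations are viewed as sets of pairs. *)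

theory Defs
  imports Main
begin

definition R_W :: "'a set \<Rightarrow> ('a set \<times> 'a set) set" where
  "R_W W = {(U, V). U \<subseteq> W \<and> V \<subseteq> W \<and> U \<inter> V = {}}"

definition belief_algebra :: "'a set \<Rightarrow> ('a set \<times> 'a set) set \<Rightarrow> bool" where
  "belief_algebra W gg \<longleftrightarrow>
     gg \<subseteq> R_W W \<and>
     (\<forall>U. U \<subseteq> W \<longrightarrow> ((U, {}) \<in> gg \<longleftrightarrow> U \<noteq> {})) \<and>
     (\<forall>U V. U \<subseteq> W \<longrightarrow> V \<subseteq> W \<longrightarrow> (U, V) \<in> gg \<longrightarrow> (V, U) \<notin> gg) \<and>
     (\<forall>U V U1 V1. U \<subseteq> W \<longrightarrow> V \<subseteq> W \<longrightarrow> U1 \<subseteq> W \<longrightarrow> V1 \<subseteq> W \<longrightarrow>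
        U1 \<supseteq> U \<longrightarrow> (U, V) \<in> gg \<longrightarrow> V \<supseteq> V1 \<longrightarrow> U1 \<inter> V1 = {} \<longrightarrow> (U1, V1) \<in> gg) \<and>
     (\<forall>U U1 V1 U2 V2. U \<subseteq> W \<longrightarrow> U1 \<subseteq> W \<longrightarrow> V1 \<subseteq> W \<longrightarrow> U2 \<subseteq> W \<longrightarrow> V2 \<subseteq> W \<longrightarrow>
        U = U1 \<union> V1 \<longrightarrow> U = U2 \<union> V2 \<longrightarrow> (U1, V1) \<in> gg \<longrightarrow> (U2, V2) \<in> gg \<longrightarrow>
        (U1 \<inter> U2, V1 \<union> V2) \<in> gg)"

end

theory Submission
  imports Defs
begin

text \<open>Axioms A0, A2 and the forward half of A1 are inherited by every subrelation, while the
  converse half of A1, A3 and A4 are Horn conditions whose conclusions hold in each member of a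
  family as soon as their premises hold in the intersection. Hence belief algebras on W are
  closed under arbitrary nonempty intersections.\<close>

lemma belief_algebraI:
  assumes "gg \<subseteq> R_W W"
    and "\<And>U. U \<subseteq> W \<Longrightarrow> (U, {}) \<in> gg \<longleftrightarrow> U \<noteq> {}"
    and "\<And>U V. (U, V) \<in> gg \<Longrightarrow> (V, U) \<notin> gg"
    and "\<And>U V U1 V1. U1 \<subseteq> W \<Longrightarrow> V1 \<subseteq> W \<Longrightarrow> U \<subseteq> U1 \<Longrightarrow> (U, V) \<in> gg \<Longrightarrow> V1 \<subseteq> V \<Longrightarrow>
      U1 \<inter> V1 = {} \<Longrightarrow> (U1, V1) \<in> gg"
    and "\<And>U1 V1 U2 V2. U1 \<union> V1 = U2 \<union> V2 \<Longrightarrow> (U1, V1) \<in> gg \<Longrightarrow> (U2, V2) \<in> gg \<Longrightarrow>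
      (U1 \<inter> U2, V1 \<union> V2) \<in> gg"
  shows "belief_algebra W gg"
  unfolding belief_algebra_def
proof (intro conjI allI impI)
  fix U V U1 V1
  assume "U1 \<subseteq> W" "V1 \<subseteq> W" "U \<subseteq> U1" "(U, V) \<in> gg" "V1 \<subseteq> V" "U1 \<inter> V1 = {}"
  then show "(U1, V1) \<in> gg" by (rule assms(4))
next
  fix U U1 V1 U2 V2
  assume "U = U1 \<union> V1" "U = U2 \<union> V2" "(U1, V1) \<in> gg" "(U2, V2) \<in> gg"
  then show "(U1 \<inter> U2, V1 \<union> V2) \<in> gg"
    using assms(5) by simp
qed (use assms(1-3) in blast)+

context
  fixes W :: "'a set" and gg :: "('a set \<times> 'a set) set"
  assumes ba: "belief_algebra W gg"
begin

lemma belief_algebra_subset_R_W: "gg \<subseteq> R_W W"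
  using ba unfolding belief_algebra_def by (elim conjE)

lemma belief_algebra_pair_subset:
  assumes "(U, V) \<in> gg"
  shows "U \<subseteq> W" "V \<subseteq> W"
  using assms belief_algebra_subset_R_W by (auto simp: R_W_def)

lemma belief_algebra_empty_right_iff: "U \<subseteq> W \<Longrightarrow> (U, {}) \<in> gg \<longleftrightarrow> U \<noteq> {}"
  using ba unfolding belief_algebra_def by (elim conjE) blast

lemma belief_algebra_asym:
  assumes "(U, V) \<in> gg"
  shows "(V, U) \<notin> gg"
proof -
  have "\<forall>U V. U \<subseteq> W \<longrightarrow> V \<subseteq> W \<longrightarrow> (U, V) \<in> gg \<longrightarrow> (V, U) \<notin> gg"
    using ba unfolding belief_algebra_def by (elim conjE) blast
  then show ?thesis
    using assms belief_algebra_pair_subset[OF assms] by blast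
qed

lemma belief_algebra_mono:
  assumes "U1 \<subseteq> W" "V1 \<subseteq> W" "U \<subseteq> U1" "(U, V) \<in> gg" "V1 \<subseteq> V" "U1 \<inter> V1 = {}"
  shows "(U1, V1) \<in> gg"
proof -
  have "\<forall>U V U1 V1. U \<subseteq> W \<longrightarrow> V \<subseteq> W \<longrightarrow> U1 \<subseteq> W \<longrightarrow> V1 \<subseteq> W \<longrightarrow>
      U1 \<supseteq> U \<longrightarrow> (U, V) \<in> gg \<longrightarrow> V \<supseteq> V1 \<longrightarrow> U1 \<inter> V1 = {} \<longrightarrow> (U1, V1) \<in> gg"
    using ba unfolding belief_algebra_def by (elim conjE) blast
  then show ?thesis
    using assms belief_algebra_pair_subset[OF assms(4)] by blast
qed

lemma belief_algebra_combine:
  assumes "U1 \<union> V1 = U2 \<union> V2" "(U1, V1) \<in> gg" "(U2, V2) \<in> gg"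
  shows "(U1 \<inter> U2, V1 \<union> V2) \<in> gg"
proof -
  have A4: "\<forall>U U1 V1 U2 V2. U \<subseteq> W \<longrightarrow> U1 \<subseteq> W \<longrightarrow> V1 \<subseteq> W \<longrightarrow> U2 \<subseteq> W \<longrightarrow> V2 \<subseteq> W \<longrightarrow>
      U = U1 \<union> V1 \<longrightarrow> U = U2 \<union> V2 \<longrightarrow> (U1, V1) \<in> gg \<longrightarrow> (U2, V2) \<in> gg \<longrightarrow>
      (U1 \<inter> U2, V1 \<union> V2) \<in> gg"
    using ba unfolding belief_algebra_def by (elim conjE)
  note sub1 = belief_algebra_pair_subset[OF assms(2)]
  note sub2 = belief_algebra_pair_subset[OF assms(3)]
  from sub1 have "U1 \<union> V1 \<subseteq> W" by simp
  from A4[rule_format, OF this sub1 sub2 refl] assms show ?thesis by simp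
qed

end

lemma belief_algebra_Inter:
  assumes "F \<noteq> {}" and ba: "\<And>gg. gg \<in> F \<Longrightarrow> belief_algebra W gg"
  shows "belief_algebra W (\<Inter>F)"
proof (rule belief_algebraI)
  obtain gg0 where gg0: "gg0 \<in> F" using assms(1) by blast
  show "\<Inter>F \<subseteq> R_W W"
    using Inter_lower[OF gg0] belief_algebra_subset_R_W[OF ba[OF gg0]] by (rule order_trans)
  show "(V, U) \<notin> \<Inter>F" if "(U, V) \<in> \<Inter>F" for U V
    using belief_algebra_asym[OF ba[OF gg0] InterD[OF that gg0]] gg0 by blast
  show "(U, {}) \<in> \<Inter>F \<longleftrightarrow> U \<noteq> {}" if "U \<subseteq> W" for U
    using belief_algebra_empty_right_iff[OF ba that] gg0 by blast
next
  fix U V U1 V1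
  assume hyps: "U1 \<subseteq> W" "V1 \<subseteq> W" "U \<subseteq> U1" "(U, V) \<in> \<Inter>F" "V1 \<subseteq> V" "U1 \<inter> V1 = {}"
  show "(U1, V1) \<in> \<Inter>F"
  proof
    fix gg assume gg: "gg \<in> F"
    show "(U1, V1) \<in> gg"
      using belief_algebra_mono[OF ba[OF gg] hyps(1-3) InterD[OF hyps(4) gg] hyps(5,6)] .
  qed
next
  fix U1 V1 U2 V2
  assume hyps: "U1 \<union> V1 = U2 \<union> V2" "(U1, V1) \<in> \<Inter>F" "(U2, V2) \<in> \<Inter>F"
  show "(U1 \<inter> U2, V1 \<union> V2) \<in> \<Inter>F"
  proof
    fix gg assume gg: "gg \<in> F"
    show "(U1 \<inter> U2, V1 \<union> V2) \<in> gg"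
      using belief_algebra_combine[OF ba[OF gg] hyps(1) InterD[OF hyps(2) gg] InterD[OF hyps(3) gg]] .
  qed
qed

theorem proposition1:
  fixes W :: "'a set" and gg gg' :: "('a set \<times> 'a set) set"
  assumes "finite W"
    and "belief_algebra W gg"
    and "belief_algebra W gg'"
  shows "belief_algebra W (gg \<inter> gg')"
proof -
  have "belief_algebra W (\<Inter>{gg, gg'})"
    by (rule belief_algebra_Inter) (use assms(2,3) in auto)
  then show ?thesis by simp
qed

end
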